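(* Let $(\mathcal{A},\circ)$ be a Novikov algebra and $\alpha$ an algebra endomorphism of $(\mathcal{A},\circ)$. Define $x\circ_\alpha y=\alpha(x)\circ\alpha(y)$ and $[x,y]^-_\alpha=\alpha(x\circ y)-\alpha(y\circ x)$ for $x,y\in\mathcal{A}$. Then $(\mathcal{A},[\cdot,\cdot]^-_\alpha,\circ_\alpha,\alpha)$ is a Hom Gel'fand-Dorfman bialgebra.
   Context: All vector spaces are over $\mathbb{C}$. A Novikov algebra is a vector space $\mathcal{A}$ with a bilinear operation $\circ$ such that $(x\circ y)\circ z=(x\circ z)\circ y$ and $(x,y,z)=(y,x,z)$ for all $x,y,z$, where $(x,y,z)=(x\circ y)\circ z-x\circ(y\circ z)$. A Hom-Novikov algebra is a vector space with a bilinear operation $\circ$ and a linear endomorphism $\alpha$ such that $(x\circ y)\circ\alpha(z)-\alpha(x)\circ(y\circ z)=(y\circ x)\circ\alpha(z)-\alpha(y)\circ(x\circ z)$ and $(x\circ y)\circ\alpha(z)=(x\circ z)\circ\alpha(y)$ for all $x,y,z$. A Hom-Lie algebra is a vector space with a bilinear map $[\cdot,\cdot]$ and a linear map $\alpha$ with $[x,y]=-[y,x]$ and $[[x,y],\alpha(z)]+[[y,z],\alpha(x)]+[[z,x],\alpha(y)]=0$. A Hom Gel'fand-Dorfman bialgebra is a vector space $\mathcal{A}$ with a linear endomorphism $\alpha$ and two bilinear operations $[\cdot,\cdot],\circ$ such that $(\mathcal{A},[\cdot,\cdot],\alpha)$ is a Hom-Lie algebra, $(\mathcal{A},\circ,\alpha)$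 is a Hom-Novikov algebra, and $[x\circ y,\alpha(z)]-[x\circ z,\alpha(y)]+[x,y]\circ\alpha(z)-[x,z]\circ\alpha(y)-\alpha(x)\circ[y,z]=0$ for all $x,y,z$. *)

theory Defs
  imports Complex_Main
begin

text \<open>A complex vector space is rendered as a type 'a of class ab_group_add together
  with a scalar multiplication sc :: complex => 'a => 'a satisfying the vector space
  axioms (locale vector_space from HOL.Vector_Spaces).\<close>

definition lin_map :: "(complex \<Rightarrow> 'a::ab_group_add \<Rightarrow> 'a) \<Rightarrow> ('a \<Rightarrow> 'a) \<Rightarrow> bool" where
  "lin_map sc f \<longleftrightarrow> (\<forall>x y. f (x + y) = f x + f y) \<and> (\<forall>c x. f (sc c x) = sc c (f x))"

definition bilin_op :: "(complex \<Rightarrow> 'a::ab_group_add \<Rightarrow> 'a) \<Rightarrow> ('a \<Rightarrow> 'a \<Rightarrow> 'a) \<Rightarrow> bool" where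
  "bilin_op sc m \<longleftrightarrow> (\<forall>z. lin_map sc (\<lambda>x. m x z)) \<and> (\<forall>x. lin_map sc (\<lambda>z. m x z))"

definition novikov :: "(complex \<Rightarrow> 'a::ab_group_add \<Rightarrow> 'a) \<Rightarrow> ('a \<Rightarrow> 'a \<Rightarrow> 'a) \<Rightarrow> bool" where
  "novikov sc m \<longleftrightarrow> bilin_op sc m \<and>
     (\<forall>x y z. m (m x y) z = m (m x z) y) \<and>
     (\<forall>x y z. m (m x y) z - m x (m y z) = m (m y x) z - m y (m x z))"

definition hom_novikov ::
  "(complex \<Rightarrow> 'a::ab_group_add \<Rightarrow> 'a) \<Rightarrow> ('a \<Rightarrow> 'a \<Rightarrow> 'a) \<Rightarrow> ('a \<Rightarrow> 'a) \<Rightarrow> bool" where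
  "hom_novikov sc m \<alpha> \<longleftrightarrow> bilin_op sc m \<and> lin_map sc \<alpha> \<and>
     (\<forall>x y z. m (m x y) (\<alpha> z) - m (\<alpha> x) (m y z) = m (m y x) (\<alpha> z) - m (\<alpha> y) (m x z)) \<and>
     (\<forall>x y z. m (m x y) (\<alpha> z) = m (m x z) (\<alpha> y))"

definition hom_lie ::
  "(complex \<Rightarrow> 'a::ab_group_add \<Rightarrow> 'a) \<Rightarrow> ('a \<Rightarrow> 'a \<Rightarrow> 'a) \<Rightarrow> ('a \<Rightarrow> 'a) \<Rightarrow> bool" where
  "hom_lie sc b \<alpha> \<longleftrightarrow> bilin_op sc b \<and> lin_map sc \<alpha> \<and>
     (\<forall>x y. b x y = - b y x) \<and>
     (\<forall>x y z. b (b x y) (\<alpha> z) + b (b y z) (\<alpha> x) + b (b z x) (\<alpha> y) = 0)"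

definition hom_GD_bialgebra ::
  "(complex \<Rightarrow> 'a::ab_group_add \<Rightarrow> 'a) \<Rightarrow> ('a \<Rightarrow> 'a \<Rightarrow> 'a) \<Rightarrow> ('a \<Rightarrow> 'a \<Rightarrow> 'a) \<Rightarrow> ('a \<Rightarrow> 'a) \<Rightarrow> bool" where
  "hom_GD_bialgebra sc b m \<alpha> \<longleftrightarrow> hom_lie sc b \<alpha> \<and> hom_novikov sc m \<alpha> \<and>
     (\<forall>x y z. b (m x y) (\<alpha> z) - b (m x z) (\<alpha> y) + m (b x y) (\<alpha> z)
              - m (b x z) (\<alpha> y) - m (\<alpha> x) (b y z) = 0)"

end

theory Submission
  imports Defs
begin

text \<open>A Novikov algebra with its commutator bracket is a Gel'fand-Dorfman bialgebra, that is,
  a Hom Gel'fand-Dorfman bialgebra with twisting map \<open>id\<close>: the commutator of a left-symmetric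
  product satisfies the Jacobi identity, and the compatibility condition is a combination of two
  instances of left symmetry and one of right commutativity. Twisting all operations of a Hom
  Gel'fand-Dorfman bialgebra by a morphism \<open>\<alpha>\<close> commuting with its twisting map gives another one,
  since each twisted defining identity is \<open>\<alpha>\<^sup>2\<close> applied to an instance of the original.
  As \<open>\<alpha>\<close> is multiplicative, the structure of the theorem is the twist by \<open>\<alpha>\<close> of the
  commutator bialgebra.\<close>

definition commutator :: "('a \<Rightarrow> 'a \<Rightarrow> 'a::ab_group_add) \<Rightarrow> 'a \<Rightarrow> 'a \<Rightarrow> 'a" where
  "commutator m x y = m x y - m y x"

definition left_sym_defect :: "('a \<Rightarrow> 'a \<Rightarrow> 'a::ab_group_add) \<Rightarrow> 'a \<Rightarrow> 'a \<Rightarrow> 'a \<Rightarrow> 'a" where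
  "left_sym_defect m x y z = m (m x y) z - m x (m y z) - (m (m y x) z - m y (m x z))"

lemma lin_map_diff: "lin_map sc f \<Longrightarrow> f (x - y) = f x - f y"
  unfolding lin_map_def by (metis add_diff_cancel diff_add_cancel)

lemma lin_map_zero: "lin_map sc f \<Longrightarrow> f 0 = 0"
  using lin_map_diff[of sc f 0 0] by simp

lemma lin_map_minus: "lin_map sc f \<Longrightarrow> f (- x) = - f x"
  using lin_map_diff[of sc f 0 x] by (simp add: lin_map_zero)

lemma lin_map_comp: "lin_map sc f \<Longrightarrow> lin_map sc g \<Longrightarrow> lin_map sc (\<lambda>x. f (g x))"
  unfolding lin_map_def by simp

lemma lin_map_diff_fun:
  assumes "vector_space sc" "lin_map sc f" "lin_map sc g"
  shows "lin_map sc (\<lambda>x. f x - g x)"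
proof -
  interpret module sc using assms(1) by (simp add: vector_space_def module_def)
  show ?thesis using assms(2,3) unfolding lin_map_def by (simp add: algebra_simps)
qed

lemma bilin_op_diff_left: "bilin_op sc m \<Longrightarrow> m (x - y) z = m x z - m y z"
  unfolding bilin_op_def by (metis lin_map_diff)

lemma bilin_op_diff_right: "bilin_op sc m \<Longrightarrow> m z (x - y) = m z x - m z y"
  unfolding bilin_op_def by (metis lin_map_diff)

lemma commutator_jacobi:
  assumes "bilin_op sc m"
    and left_sym: "\<And>x y z. m (m x y) z - m x (m y z) = m (m y x) z - m y (m x z)"
  shows "commutator m (commutator m x y) z + commutator m (commutator m y z) x
           + commutator m (commutator m z x) y = 0"
proof -
  have "commutator m (commutator m x y) z + commutator m (commutator m y z) x
          + commutator m (commutator m z x) y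
        = left_sym_defect m x y z + left_sym_defect m y z x + left_sym_defect m z x y"
    unfolding left_sym_defect_def commutator_def bilin_op_diff_left[OF assms(1)] bilin_op_diff_right[OF assms(1)]
    by (simp add: algebra_simps)
  also have "\<dots> = 0" by (simp add: left_sym_defect_def left_sym)
  finally show ?thesis .
qed

lemma novikov_commutator_compatible:
  assumes "bilin_op sc m"
    and right_comm: "\<And>x y z. m (m x y) z = m (m x z) y"
    and left_sym: "\<And>x y z. m (m x y) z - m x (m y z) = m (m y x) z - m y (m x z)"
  shows "commutator m (m x y) z - commutator m (m x z) y + m (commutator m x y) z
           - m (commutator m x z) y - m x (commutator m y z) = 0"
proof -
  have "commutator m (m x y) z - commutator m (m x z) y + m (commutator m x y) z
          - m (commutator m x z) y - m x (commutator m y z)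
        = left_sym_defect m z x y - left_sym_defect m y x z + (m (m x y) z - m (m x z) y)"
    unfolding left_sym_defect_def commutator_def bilin_op_diff_left[OF assms(1)] bilin_op_diff_right[OF assms(1)]
    by (simp add: algebra_simps)
  also have "\<dots> = 0" by (simp add: left_sym_defect_def left_sym right_comm[of x y z])
  finally show ?thesis .
qed

lemma lin_map_id: "lin_map sc id"
  unfolding lin_map_def by simp

lemma novikov_commutator_GD_bialgebra:
  assumes "vector_space sc" "novikov sc m"
  shows "hom_GD_bialgebra sc (commutator m) m id"
proof -
  have bilin: "bilin_op sc m"
    and right_comm: "\<And>x y z. m (m x y) z = m (m x z) y"
    and left_sym: "\<And>x y z. m (m x y) z - m x (m y z) = m (m y x) z - m y (m x z)"
    using assms(2) unfolding novikov_def by auto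
  have lin_left: "\<And>z. lin_map sc (\<lambda>x. m x z)" and lin_right: "\<And>x. lin_map sc (\<lambda>z. m x z)"
    using bilin unfolding bilin_op_def by blast+
  have "bilin_op sc (commutator m)"
    unfolding bilin_op_def commutator_def
    by (intro conjI allI lin_map_diff_fun[OF assms(1)] lin_left lin_right)
  then show ?thesis
    unfolding hom_GD_bialgebra_def hom_lie_def hom_novikov_def
    using commutator_jacobi[of sc m, OF bilin left_sym]
      novikov_commutator_compatible[of sc m, OF bilin right_comm left_sym]
      bilin left_sym right_comm
    by (simp add: lin_map_id commutator_def)
qed

lemma hom_GD_bialgebra_twist:
  assumes GD: "hom_GD_bialgebra sc b m \<beta>"
    and lin: "lin_map sc \<alpha>"
    and commute: "\<And>x. \<alpha> (\<beta> x) = \<beta> (\<alpha> x)"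
    and mult_b: "\<And>x y. \<alpha> (b x y) = b (\<alpha> x) (\<alpha> y)"
    and mult_m: "\<And>x y. \<alpha> (m x y) = m (\<alpha> x) (\<alpha> y)"
  shows "hom_GD_bialgebra sc (\<lambda>x y. \<alpha> (b x y)) (\<lambda>x y. \<alpha> (m x y)) (\<lambda>x. \<alpha> (\<beta> x))"
proof -
  have bilin_b: "bilin_op sc b" and bilin_m: "bilin_op sc m" and lin_\<beta>: "lin_map sc \<beta>"
    and antisym: "\<And>x y. b x y = - b y x"
    and jacobi: "\<And>x y z. b (b x y) (\<beta> z) + b (b y z) (\<beta> x) + b (b z x) (\<beta> y) = 0"
    and left_sym: "\<And>x y z. m (m x y) (\<beta> z) - m (\<beta> x) (m y z) = m (m y x) (\<beta> z) - m (\<beta> y) (m x z)"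
    and right_comm: "\<And>x y z. m (m x y) (\<beta> z) = m (m x z) (\<beta> y)"
    and compatible: "\<And>x y z. b (m x y) (\<beta> z) - b (m x z) (\<beta> y) + m (b x y) (\<beta> z)
                                  - m (b x z) (\<beta> y) - m (\<beta> x) (b y z) = 0"
    using GD unfolding hom_GD_bialgebra_def hom_lie_def hom_novikov_def by blast+
  have bilin_twist: "bilin_op sc (\<lambda>x y. \<alpha> (f x y))" if "bilin_op sc f" for f
    using that lin_map_comp[OF lin] unfolding bilin_op_def by blast
  show ?thesis
    unfolding hom_GD_bialgebra_def hom_lie_def hom_novikov_def
  proof (intro conjI allI bilin_twist bilin_b bilin_m lin_map_comp[OF lin lin_\<beta>])
    fix x y
    show "\<alpha> (b x y) = - \<alpha> (b y x)"
      by (subst antisym) (rule lin_map_minus[OF lin])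
  qed (simp_all add: commute mult_b mult_m jacobi left_sym right_comm compatible)
qed

theorem corollary3p4:
  fixes sc :: "complex \<Rightarrow> 'a::ab_group_add \<Rightarrow> 'a"
    and m :: "'a \<Rightarrow> 'a \<Rightarrow> 'a" and \<alpha> :: "'a \<Rightarrow> 'a"
  assumes "vector_space sc"
    and "novikov sc m"
    and "lin_map sc \<alpha>"
    and "\<forall>x y. \<alpha> (m x y) = m (\<alpha> x) (\<alpha> y)"
  shows "hom_GD_bialgebra sc (\<lambda>x y. \<alpha> (m x y) - \<alpha> (m y x)) (\<lambda>x y. m (\<alpha> x) (\<alpha> y)) \<alpha>"
proof -
  have mult: "\<And>x y. \<alpha> (m x y) = m (\<alpha> x) (\<alpha> y)" using assms(4) by blast
  have mult_commutator: "\<And>x y. \<alpha> (commutator m x y) = commutator m (\<alpha> x) (\<alpha> y)"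
    unfolding commutator_def by (simp only: lin_map_diff[OF assms(3)] mult)
  have "hom_GD_bialgebra sc (\<lambda>x y. \<alpha> (commutator m x y)) (\<lambda>x y. \<alpha> (m x y)) \<alpha>"
    using hom_GD_bialgebra_twist[of sc "commutator m" m id \<alpha>]
      novikov_commutator_GD_bialgebra[OF assms(1,2)] assms(3) mult_commutator mult by simp
  then show ?thesis
    unfolding commutator_def lin_map_diff[OF assms(3)] mult .
qed

end
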